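(* Let $(M,\Gamma,\le)$ be a $po$-$\Gamma$-groupoid and let $f$ be a fuzzy subset of $M$. Then $f$ is a fuzzy left ideal of $M$ if and only if (1) $1\circ f\preceq f$ and (2) for all $x,y\in M$, if $x\le y$ then $f(x)\ge f(y)$.
   Context: Let $M$ and $\Gamma$ be nonempty sets with a map $M\times\Gamma\times M\to M$, $(a,\gamma,b)\mapsto a\gamma b$. A $po$-$\Gamma$-groupoid is such an $M$ with a partial order $\le$ on $M$ such that $a\le b$ implies $a\gamma c\le b\gamma c$ and $c\gamma a\le c\gamma b$ for all $c\in M$, $\gamma\in\Gamma$. A fuzzy subset of $M$ is a map $M\to[0,1]$. For $a\in M$ let $A_a=\{(y,z)\in M\times M : a\le y\gamma z \text{ for some } \gamma\in\Gamma\}$. For fuzzy subsets $f,g$, define $(f\circ g)(a)=\bigvee_{(y,z)\in A_a}\min\{f(y),g(z)\}$ if $A_a\neq\emptyset$ and $(f\circ g)(a)=0$ if $A_a=\emptyset$. $f\preceq g$ means $f(a)\le g(a)$ for all $a\in M$. $1$ denotes the fuzzy subset with $1(x)=1$ for all $x\in M$. A fuzzy left ideal of $M$ is a fuzzy subset $f$ with $f(x\gamma y)\ge f(y)$ for all $x,y\in M$, $\gamma\in\Gamma$, and such that $x\le y$ implies $f(x)\ge f(y)$. *)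

theory Defs
  imports Complex_Main
begin

definition po_Gamma_groupoid ::
  "('m \<Rightarrow> 'g \<Rightarrow> 'm \<Rightarrow> 'm) \<Rightarrow> ('m \<Rightarrow> 'm \<Rightarrow> bool) \<Rightarrow> bool" where
  "po_Gamma_groupoid op le \<longleftrightarrow>
     (\<forall>a. le a a) \<and> (\<forall>a b. le a b \<and> le b a \<longrightarrow> a = b) \<and>
     (\<forall>a b c. le a b \<and> le b c \<longrightarrow> le a c) \<and>
     (\<forall>a b c \<gamma>. le a b \<longrightarrow> le (op a \<gamma> c) (op b \<gamma> c) \<and> le (op c \<gamma> a) (op c \<gamma> b))"

definition fuzzy_subset :: "('m \<Rightarrow> real) \<Rightarrow> bool" where
  "fuzzy_subset f \<longleftrightarrow> (\<forall>x. 0 \<le> f x \<and> f x \<le> 1)"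

definition A_set :: "('m \<Rightarrow> 'g \<Rightarrow> 'm \<Rightarrow> 'm) \<Rightarrow> ('m \<Rightarrow> 'm \<Rightarrow> bool) \<Rightarrow> 'm \<Rightarrow> ('m \<times> 'm) set" where
  "A_set op le a = {(y, z). \<exists>\<gamma>. le a (op y \<gamma> z)}"

definition fuzzy_comp ::
  "('m \<Rightarrow> 'g \<Rightarrow> 'm \<Rightarrow> 'm) \<Rightarrow> ('m \<Rightarrow> 'm \<Rightarrow> bool) \<Rightarrow> ('m \<Rightarrow> real) \<Rightarrow> ('m \<Rightarrow> real) \<Rightarrow> 'm \<Rightarrow> real" where
  "fuzzy_comp op le f g a =
     (if A_set op le a = {} then 0
      else Sup ((\<lambda>(y, z). min (f y) (g z)) ` A_set op le a))"

definition fuzzy_le :: "('m \<Rightarrow> real) \<Rightarrow> ('m \<Rightarrow> real) \<Rightarrow> bool" where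
  "fuzzy_le f g \<longleftrightarrow> (\<forall>a. f a \<le> g a)"

definition fuzzy_left_ideal ::
  "('m \<Rightarrow> 'g \<Rightarrow> 'm \<Rightarrow> 'm) \<Rightarrow> ('m \<Rightarrow> 'm \<Rightarrow> bool) \<Rightarrow> ('m \<Rightarrow> real) \<Rightarrow> bool" where
  "fuzzy_left_ideal op le f \<longleftrightarrow>
     (\<forall>x y \<gamma>. f (op x \<gamma> y) \<ge> f y) \<and> (\<forall>x y. le x y \<longrightarrow> f x \<ge> f y)"

end

theory Submission
  imports Defs
begin

text \<open>If \<open>a \<le> x \<gamma> y\<close> then \<open>(x, y) \<in> A\<^sub>a\<close>, so \<open>min (g x) (h y)\<close> is one of the values
  whose supremum is \<open>(g \<circ> h)(a)\<close>. For \<open>a = x \<gamma> y\<close> and \<open>g = 1\<close> this gives \<open>f y \<le> (1 \<circ> f)(x \<gamma> y)\<close>;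
  conversely every value \<open>min 1 (f z)\<close> with \<open>a \<le> y \<gamma> z\<close> is at most \<open>f (y \<gamma> z) \<le> f a\<close> for a
  fuzzy left ideal.\<close>

lemma min_le_fuzzy_comp:
  fixes g h :: "'m \<Rightarrow> real"
  assumes "le a (op x \<gamma> y)" and "\<And>u. g u \<le> c"
  shows "min (g x) (h y) \<le> fuzzy_comp op le g h a"
proof -
  let ?S = "(\<lambda>(y, z). min (g y) (h z)) ` A_set op le a"
  have mem: "(x, y) \<in> A_set op le a"
    using assms(1) by (auto simp: A_set_def)
  have "bdd_above ?S"
    by (rule bdd_aboveI[where M = c]) (auto intro: min.coboundedI1 assms(2))
  moreover have "min (g x) (h y) \<in> ?S"
    using mem by force
  ultimately have "min (g x) (h y) \<le> Sup ?S"
    by (rule cSup_upper[rotated])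
  then show ?thesis
    using mem by (auto simp: fuzzy_comp_def)
qed

lemma fuzzy_left_ideal_comp_le:
  assumes ideal: "fuzzy_left_ideal op le f" and nonneg: "\<And>a. 0 \<le> f a"
  shows "fuzzy_le (fuzzy_comp op le (\<lambda>_. 1) f) f"
  unfolding fuzzy_le_def
proof
  fix a
  show "fuzzy_comp op le (\<lambda>_. 1) f a \<le> f a"
  proof (cases "A_set op le a = {}")
    case True
    then show ?thesis
      using nonneg by (simp add: fuzzy_comp_def)
  next
    case False
    have "Sup ((\<lambda>(y, z). min 1 (f z)) ` A_set op le a) \<le> f a"
    proof (rule cSup_least)
      fix r
      assume "r \<in> (\<lambda>(y, z). min 1 (f z)) ` A_set op le a"
      then obtain y z \<gamma> where r: "r = min 1 (f z)" and "le a (op y \<gamma> z)"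
        by (auto simp: A_set_def)
      then have "f (op y \<gamma> z) \<le> f a" and "f z \<le> f (op y \<gamma> z)"
        using ideal by (auto simp: fuzzy_left_ideal_def)
      then show "r \<le> f a"
        using r by linarith
    qed (use False in blast)
    then show ?thesis
      using False by (simp add: fuzzy_comp_def)
  qed
qed

lemma fuzzy_left_ideal_of_comp_le:
  assumes refl: "\<And>a. le a a" and bounded: "\<And>a. f a \<le> 1"
    and comp_le: "fuzzy_le (fuzzy_comp op le (\<lambda>_. 1) f) f"
    and antitone: "\<And>x y. le x y \<Longrightarrow> f y \<le> f x"
  shows "fuzzy_left_ideal op le f"
proof -
  have "f y \<le> f (op x \<gamma> y)" for x y \<gamma>
  proof -
    have "min 1 (f y) \<le> fuzzy_comp op le (\<lambda>_. 1) f (op x \<gamma> y)"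
      using refl by (rule min_le_fuzzy_comp[where c = 1]) simp
    also have "\<dots> \<le> f (op x \<gamma> y)"
      using comp_le by (simp add: fuzzy_le_def)
    finally show ?thesis
      using bounded[of y] by simp
  qed
  then show ?thesis
    using antitone by (simp add: fuzzy_left_ideal_def)
qed

theorem proposition5:
  fixes op :: "'m \<Rightarrow> 'g \<Rightarrow> 'm \<Rightarrow> 'm" and le :: "'m \<Rightarrow> 'm \<Rightarrow> bool" and f :: "'m \<Rightarrow> real"
  assumes "po_Gamma_groupoid op le"
    and "fuzzy_subset f"
  shows "fuzzy_left_ideal op le f \<longleftrightarrow>
           (fuzzy_le (fuzzy_comp op le (\<lambda>_. 1) f) f \<and> (\<forall>x y. le x y \<longrightarrow> f x \<ge> f y))"
proof -
  have refl: "\<And>a. le a a"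
    using assms(1) by (simp add: po_Gamma_groupoid_def)
  have range: "\<And>a. 0 \<le> f a" "\<And>a. f a \<le> 1"
    using assms(2) by (simp_all add: fuzzy_subset_def)
  show ?thesis
  proof
    assume "fuzzy_left_ideal op le f"
    then show "fuzzy_le (fuzzy_comp op le (\<lambda>_. 1) f) f \<and> (\<forall>x y. le x y \<longrightarrow> f x \<ge> f y)"
      using fuzzy_left_ideal_comp_le range(1) by (auto simp: fuzzy_left_ideal_def)
  next
    assume "fuzzy_le (fuzzy_comp op le (\<lambda>_. 1) f) f \<and> (\<forall>x y. le x y \<longrightarrow> f x \<ge> f y)"
    then show "fuzzy_left_ideal op le f"
      by (intro fuzzy_left_ideal_of_comp_le refl range(2)) auto
  qed
qed

end
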